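(* Let $\mathcal R$ be an $(m|n)$-rational difference operator, and let $\mathcal R=\mathcal D_{\bar0}\mathcal D_{\bar1}^{-1}$ be the fractional factorization with $\mathrm{ord}\,\mathcal D_{\bar1}=n$ and constant term of $\mathcal D_{\bar1}$ equal to $1$. Let $V=\ker\mathcal D_{\bar0}$, $U=\ker\mathcal D_{\bar1}$ (kernels in $\mathbb{K}$). Let $\{v_1,\dots,v_m\}$ be a basis of $V$, $\{u_1,\dots,u_n\}$ a basis of $U$, and $\boldsymbol s\in S_{m|n}$. Define $d_i=1-f_i\tau$, $i=1,\dots,m+n$, by \[f_i=\ln'\frac{\mathrm{Wr}(v_1,\dots,v_{\boldsymbol s_i^++1},u_1,\dots,u_{\boldsymbol s_i^-})}{\mathrm{Wr}(v_1,\dots,v_{\boldsymbol s_i^+},u_1,\dots,u_{\boldsymbol s_i^-})[1]}\ \text{ if } s_i=1,\qquad f_i=\ln'\frac{\mathrm{Wr}(v_1,\dots,v_{\boldsymbol s_i^+},u_1,\dots,u_{\boldsymbol s_i^-+1})}{\mathrm{Wr}(v_1,\dots,v_{\boldsymbol s_i^+},u_1,\dots,u_{\boldsymbol s_i^-})[1]}\ \text{ if } s_i=-1.\] Then $\mathcal R=d_1^{s_1}d_2^{s_2}\cdots d_{m+n}^{s_{m+n}}$ is a complete factorization of $\mathcal R$ with parity sequence $\boldsymbol s$.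
   Context: Fix $h\in\mathbb{C}^\times$. $\mathbb{K}=\mathbb{C}(x)$; for $f\in\mathbb{K}$, $f[i](x)=f(x-ih)$, and $\ln'(f)=f/f[1]$. $\mathbb{K}[\tau]$ is the ring of difference operators $\sum_{j=0}^ra_j\tau^j$ ($a_j\in\mathbb{K}$) with $\tau f=f[1]\tau$; order is the largest $j$ with $a_j\ne0$, monic means $a_r=1$, $a_0$ is the constant term. $\mathcal D$ of order $r$ is completely factorable over $\mathbb{K}$ if $\mathcal D=a_r(\tau-g_1)\cdots(\tau-g_r)$ with $g_i\in\mathbb{K}$. $\mathbb{K}(\tau)$ is the division ring of fractions of $\mathbb{K}[\tau]$. A fractional factorization of $\mathcal R\in\mathbb{K}(\tau)$ is $\mathcal R=\mathcal D_{\bar0}\mathcal D_{\bar1}^{-1}$ with $\mathcal D_{\bar0},\mathcal D_{\bar1}\in\mathbb{K}[\tau]$; it is minimal if $\mathcal D_{\bar1}$ is monic of minimal possible order. $\mathcal R$ is an $(m|n)$-rational difference operator if in its minimal fractional factorization $\mathcal D_{\bar0},\mathcal D_{\bar1}$ are completely factorable over $\mathbb{K}$, $\mathrm{ord}\,\mathcal D_{\bar0}=m$, $\mathrm{ord}\,\mathcal D_{\bar1}=n$, and they have the same nonzero constant term. Parity sequences: $S_{m|n}$ is the set of $\boldsymbol s\in\{\pm1\}^{m+n}$ with exactly $m$ entries $1$; $\boldsymbol s_i^+=\#\{j>i:s_j=1\}$, $\boldsymbol s_i^-=\#\{j<i:s_j=-1\}$. A complete factorization of $\mathcal R$ with parity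 sequence $\boldsymbol s$ is an equality $\mathcal R=d_1^{s_1}\cdots d_{m+n}^{s_{m+n}}$ with $d_i=1-f_i\tau$, $f_i\in\mathbb{K}$. Discrete Wronskian: $\mathrm{Wr}(g_1,\dots,g_r)=\det\big(g_j(x-(i-1)h)\big)_{i,j=1}^r$ (empty Wronskian $=1$). *)

theory Defs
  imports "HOL-Computational_Algebra.Polynomial"
          "HOL-Computational_Algebra.Normalized_Fraction"
          "HOL-Computational_Algebra.Polynomial_Factorial"
          "HOL-Computational_Algebra.Field_as_Ring"
          "Jordan_Normal_Form.Determinant"
begin

type_synonym K = "complex poly fract"

definition kconst :: "complex \<Rightarrow> K" where
  "kconst c = Fract [:c:] 1"

text \<open>Shift: for f in K, (shift h i f)(x) = f(x - i h), i.e. f[i].\<close>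
definition shift :: "complex \<Rightarrow> nat \<Rightarrow> K \<Rightarrow> K" where
  "shift h i f =
     (let pq = quot_of_fract f; s = [: - (of_nat i * h), 1 :]
      in Fract (pcompose (fst pq) s) (pcompose (snd pq) s))"

definition lnd :: "complex \<Rightarrow> K \<Rightarrow> K" where
  "lnd h f = f / shift h 1 f"

text \<open>Discrete Wronskian: Wr(g_1,...,g_r) = det (g_j(x-(i-1)h))_{i,j=1..r};
  the empty Wronskian is det of the 0x0 matrix, i.e. 1.\<close>
definition Wr :: "complex \<Rightarrow> K list \<Rightarrow> K" where
  "Wr h gs = det (mat (length gs) (length gs) (\<lambda>(i, j). shift h i (gs ! j)))"

text \<open>A (skew) power series sum_j a_j tau^j is its coefficient function nat => K.  The division ring of
  fractions K(tau) embeds in the skew Laurent series ring, and every operator with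
  nonzero constant term is a unit already in K[[tau]]; all identities below only
  involve such inverses.\<close>

definition sp_mult :: "complex \<Rightarrow> (nat \<Rightarrow> K) \<Rightarrow> (nat \<Rightarrow> K) \<Rightarrow> (nat \<Rightarrow> K)" where
  "sp_mult h a b = (\<lambda>n. \<Sum>i\<le>n. a i * shift h i (b (n - i)))"

definition sp_one :: "nat \<Rightarrow> K" where
  "sp_one = (\<lambda>n. if n = 0 then 1 else 0)"

definition sp_const :: "K \<Rightarrow> (nat \<Rightarrow> K)" where
  "sp_const a = (\<lambda>n. if n = 0 then a else 0)"

definition tau_minus :: "K \<Rightarrow> (nat \<Rightarrow> K)" where
  "tau_minus g = (\<lambda>n. if n = 0 then - g else if n = 1 then 1 else 0)"

definition one_minus_tau :: "K \<Rightarrow> (nat \<Rightarrow> K)" where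
  "one_minus_tau f = (\<lambda>n. if n = 0 then 1 else if n = 1 then - f else 0)"

text \<open>Inverse (for series with nonzero constant term, where it exists uniquely).\<close>
definition sp_inv :: "complex \<Rightarrow> (nat \<Rightarrow> K) \<Rightarrow> (nat \<Rightarrow> K)" where
  "sp_inv h a = (THE b. sp_mult h a b = sp_one)"

definition sp_prod :: "complex \<Rightarrow> (nat \<Rightarrow> K) list \<Rightarrow> (nat \<Rightarrow> K)" where
  "sp_prod h xs = foldr (sp_mult h) xs sp_one"

definition is_diff_op :: "(nat \<Rightarrow> K) \<Rightarrow> bool" where
  "is_diff_op D \<longleftrightarrow> finite {j. D j \<noteq> 0}"

definition op_ord :: "(nat \<Rightarrow> K) \<Rightarrow> nat" where
  "op_ord D = Max {j. D j \<noteq> 0}"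

definition op_apply :: "complex \<Rightarrow> (nat \<Rightarrow> K) \<Rightarrow> K \<Rightarrow> K" where
  "op_apply h D f = (\<Sum>j\<in>{j. D j \<noteq> 0}. D j * shift h j f)"

definition op_kernel :: "complex \<Rightarrow> (nat \<Rightarrow> K) \<Rightarrow> K set" where
  "op_kernel h D = {f. op_apply h D f = 0}"

definition completely_factorable :: "complex \<Rightarrow> (nat \<Rightarrow> K) \<Rightarrow> bool" where
  "completely_factorable h D \<longleftrightarrow>
     (\<exists>g :: nat \<Rightarrow> K. D = sp_mult h (sp_const (D (op_ord D)))
                          (sp_prod h (map (\<lambda>i. tau_minus (g i)) [1..<op_ord D + 1])))"

definition is_basis_of :: "(nat \<Rightarrow> K) \<Rightarrow> nat \<Rightarrow> K set \<Rightarrow> bool" where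
  "is_basis_of v k W \<longleftrightarrow>
     (\<forall>i\<in>{1..k}. v i \<in> W) \<and>
     (\<forall>c :: nat \<Rightarrow> complex. (\<Sum>i=1..k. kconst (c i) * v i) = 0 \<longrightarrow> (\<forall>i\<in>{1..k}. c i = 0)) \<and>
     (\<forall>f\<in>W. \<exists>c :: nat \<Rightarrow> complex. f = (\<Sum>i=1..k. kconst (c i) * v i))"

definition parity_seqs :: "nat \<Rightarrow> nat \<Rightarrow> (nat \<Rightarrow> int) set" where
  "parity_seqs m n = {s. (\<forall>i\<in>{1..m+n}. s i = 1 \<or> s i = -1) \<and>
                          (\<forall>i. i \<notin> {1..m+n} \<longrightarrow> s i = 0) \<and>
                          card {i\<in>{1..m+n}. s i = 1} = m}"

definition s_plus :: "nat \<Rightarrow> (nat \<Rightarrow> int) \<Rightarrow> nat \<Rightarrow> nat" where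
  "s_plus N s i = card {j\<in>{1..N}. i < j \<and> s j = 1}"

definition s_minus :: "nat \<Rightarrow> (nat \<Rightarrow> int) \<Rightarrow> nat \<Rightarrow> nat" where
  "s_minus N s i = card {j\<in>{1..N}. j < i \<and> s j = -1}"

definition Wr_vu :: "complex \<Rightarrow> (nat \<Rightarrow> K) \<Rightarrow> nat \<Rightarrow> (nat \<Rightarrow> K) \<Rightarrow> nat \<Rightarrow> K" where
  "Wr_vu h v a u b = Wr h (map v [1..<a+1] @ map u [1..<b+1])"

end

theory Submission
  imports Defs
begin

text \<open>
  For a list \<open>ws\<close> with nonzero Casoratian there is exactly one operator of order at most
  \<open>|ws|\<close> with constant term 1 whose kernel contains \<open>ws\<close>; expanding \<open>Wr(ws, y)\<close> along the
  column of \<open>y\<close> shows that it acts by \<open>y \<mapsto> \<plusminus>Wr(ws, y) / Wr(ws)[1]\<close>. Consequently adjoining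
  a function \<open>w\<close> to \<open>ws\<close> multiplies this operator on the left by
  \<open>1 - ln'(Wr(ws, w) / Wr(ws)[1]) \<tau>\<close>, the unique such factor killing its value at \<open>w\<close>.

  Minimality of \<open>D\<^sub>0 D\<^sub>1\<^sup>-\<^sup>1\<close> forces \<open>ker D\<^sub>0 \<inter> ker D\<^sub>1 = 0\<close>: a common kernel element \<open>w\<close>
  splits off the common right factor \<open>1 - (w / w[1]) \<tau>\<close>. So the \<open>v\<^sub>i, u\<^sub>j\<close> are linearly
  independent, and since the only shift-invariant rational functions are constants, every
  Casoratian \<open>Wr(v\<^sub>1, \<dots>, v\<^sub>a, u\<^sub>1, \<dots>, u\<^sub>b)\<close> is nonzero, so the operators \<open>L(a, b)\<close> attached to these lists
  exist, with \<open>D\<^sub>0 = L(m, 0)\<close> and \<open>D\<^sub>1 = L(0, n)\<close>. Walking from \<open>(0, n)\<close> to \<open>(m, 0)\<close> along the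
  lattice path prescribed by \<open>s\<close>, a step in \<open>a\<close> multiplies by \<open>d\<^sub>i\<close> and a step back in \<open>b\<close>
  by \<open>d\<^sub>i\<^sup>-\<^sup>1\<close>, and the product telescopes to \<open>D\<^sub>0 D\<^sub>1\<^sup>-\<^sup>1\<close>.
\<close>

section \<open>The shift automorphism of \<open>\<complex>(x)\<close>\<close>

definition shift_poly :: "complex \<Rightarrow> nat \<Rightarrow> complex poly" where
  "shift_poly h i = [: - (of_nat i * h), 1 :]"

lemma degree_shift_poly [simp]: "degree (shift_poly h i) = 1"
  by (simp add: shift_poly_def)

lemma pcompose_shift_poly_eq_0_iff [simp]: "pcompose p (shift_poly h i) = 0 \<longleftrightarrow> p = 0"
  by (rule pcompose_eq_0_iff) simp

lemma poly_shift_poly [simp]: "poly (shift_poly h i) x = x - of_nat i * h"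
  by (simp add: shift_poly_def)

lemma shift_Fract:
  assumes "b \<noteq> 0"
  shows "shift h i (Fract a b) = Fract (pcompose a (shift_poly h i)) (pcompose b (shift_poly h i))"
proof -
  obtain p q where pq: "quot_of_fract (Fract a b) = (p, q)" by (cases "quot_of_fract (Fract a b)")
  have q0: "q \<noteq> 0" using snd_quot_of_fract_nonzero[of "Fract a b"] pq by simp
  have "Fract p q = Fract a b" using Fract_quot_of_fract[of "Fract a b"] pq by simp
  hence e: "p * b = a * q" using q0 assms by (simp add: eq_fract)
  have "pcompose p (shift_poly h i) * pcompose b (shift_poly h i) =
        pcompose a (shift_poly h i) * pcompose q (shift_poly h i)"
    using arg_cong[OF e, of "\<lambda>x. pcompose x (shift_poly h i)"] by (simp add: pcompose_mult)
  thus ?thesis unfolding shift_def Let_def pq using q0 assms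
    by (simp add: eq_fract shift_poly_def[symmetric])
qed

lemma shift_add: "shift h i (x + y) = shift h i x + shift h i y"
  by (cases x, cases y) (simp add: shift_Fract pcompose_add pcompose_mult)

lemma shift_mult: "shift h i (x * y) = shift h i x * shift h i y"
  by (cases x, cases y) (simp add: shift_Fract pcompose_mult)

lemma shift_zero: "shift h i 0 = 0"
  by (simp add: Zero_fract_def shift_Fract pcompose_1)

lemma shift_one: "shift h i 1 = 1"
  by (simp add: One_fract_def shift_Fract pcompose_1)

lemma field_hom_shift: "field_hom (shift h i)"
  by unfold_locales (simp_all add: shift_add shift_mult shift_zero shift_one)

interpretation shift: field_hom "shift h i"
  by (rule field_hom_shift)

lemma shift_shift: "shift h i (shift h j x) = shift h (i + j) x"
proof (cases x)
  case (Fract a b)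
  have "pcompose (shift_poly h j) (shift_poly h i) = shift_poly h (i + j)"
    by (simp add: shift_poly_def pcompose_pCons algebra_simps)
  thus ?thesis using Fract by (simp add: shift_Fract pcompose_assoc[symmetric])
qed

lemma shift_0 [simp]: "shift h 0 x = x"
  by (cases x) (simp add: shift_Fract shift_poly_def)

lemma shift_kconst [simp]: "shift h i (kconst c) = kconst c"
  by (simp add: kconst_def shift_Fract pcompose_1)

lemma kconst_0 [simp]: "kconst 0 = 0"
  by (simp add: kconst_def Zero_fract_def)

lemma shift_invariant_poly_is_const:
  assumes h: "h \<noteq> 0" and r: "pcompose r (shift_poly h 1) = r"
  shows "r = [:poly r 0:]"
proof (rule ccontr)
  define r' where "r' = r - [:poly r 0:]"
  assume "r \<noteq> [:poly r 0:]"
  hence nz: "r' \<noteq> 0" by (simp add: r'_def)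
  have per: "poly r' (x - h) = poly r' x" for x
  proof -
    have "poly r (x - h) = poly (pcompose r (shift_poly h 1)) x" by (simp add: poly_pcompose)
    thus ?thesis using r by (simp add: r'_def)
  qed
  have roots: "poly r' (- (of_nat k * h)) = 0" for k
  proof (induction k)
    case 0 then show ?case by (simp add: r'_def)
  next
    case (Suc k)
    have "poly r' (- (of_nat (Suc k) * h)) = poly r' (- (of_nat k * h) - h)"
      by (rule arg_cong[where f="poly r'"]) (simp add: algebra_simps)
    also have "\<dots> = 0" using per Suc by simp
    finally show ?case .
  qed
  have "inj (\<lambda>k::nat. - (of_nat k * h))" using h by (auto simp: inj_def)
  hence "infinite (range (\<lambda>k::nat. - (of_nat k * h)))"
    using finite_imageD by blast
  moreover have "range (\<lambda>k::nat. - (of_nat k * h)) \<subseteq> {x. poly r' x = 0}" using roots by auto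
  ultimately show False using poly_roots_finite[OF nz] finite_subset by blast
qed

text \<open>The denominator of a shift-invariant fraction divides its own shift, hence equals it.\<close>

lemma shift_invariant_is_kconst:
  assumes h: "h \<noteq> 0" and f: "shift h 1 f = f"
  shows "\<exists>c. f = kconst c"
proof -
  obtain p q where pq: "quot_of_fract f = (p, q)" by (cases "quot_of_fract f")
  have q0: "q \<noteq> 0" using snd_quot_of_fract_nonzero[of f] pq by simp
  have fpq: "f = Fract p q" using Fract_quot_of_fract[of f] pq by simp
  have cop: "coprime p q" using coprime_quot_of_fract[of f] pq by simp
  let ?l = "shift_poly h 1"
  have "Fract (pcompose p ?l) (pcompose q ?l) = Fract p q" using f fpq q0 by (simp add: shift_Fract)
  hence e: "pcompose p ?l * q = p * pcompose q ?l" using q0 by (simp add: eq_fract)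
  have "q dvd p * pcompose q ?l" using e by (metis dvd_triv_right)
  hence "q dvd pcompose q ?l" using cop by (metis coprime_commute coprime_dvd_mult_right_iff)
  then obtain k where k: "pcompose q ?l = q * k" by (auto simp: dvd_def)
  have k0: "k \<noteq> 0" using k q0 by auto
  have "degree (pcompose q ?l) = degree q" by (simp add: degree_pcompose)
  hence "degree k = 0" using k q0 k0 by (simp add: degree_mult_eq)
  then obtain \<kappa> where kk: "k = [:\<kappa>:]" by (metis degree_eq_zeroE)
  have "lead_coeff (pcompose q ?l) = lead_coeff q"
    by (simp add: lead_coeff_comp shift_poly_def)
  hence "lead_coeff q * \<kappa> = lead_coeff q" using k kk by (simp only: lead_coeff_mult) simp
  hence "\<kappa> = 1" using q0 k0 kk by auto
  hence ql: "pcompose q ?l = q" using k kk by simp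
  hence qc: "q = [:poly q 0:]" using shift_invariant_poly_is_const[OF h] by blast
  have "pcompose p ?l = p" using e ql q0 by simp
  hence pc: "p = [:poly p 0:]" using shift_invariant_poly_is_const[OF h] by blast
  have c0: "poly q 0 \<noteq> 0" using qc q0 by (metis pCons_0_0)
  have "Fract [:poly p 0:] [:poly q 0:] = Fract [:poly p 0 / poly q 0:] 1"
    using c0 by (subst eq_fract) auto
  hence "f = kconst (poly p 0 / poly q 0)"
    unfolding kconst_def using fpq pc qc by metis
  thus ?thesis by blast
qed

section \<open>The ring of skew power series\<close>

lemma sp_mult_assoc: "sp_mult h (sp_mult h a b) c = sp_mult h a (sp_mult h b c)"
proof
  fix n
  define g where "g = (\<lambda>j l. a j * shift h j (b l) * shift h (j + l) (c (n - (j + l))))"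
  have "sp_mult h (sp_mult h a b) c n = (\<Sum>k\<le>n. \<Sum>j\<le>k. g j (k - j))"
    unfolding sp_mult_def g_def
    by (intro sum.cong refl) (simp add: sum_distrib_right)
  also have "\<dots> = (\<Sum>(j,l)\<in>{(j,l). j + l \<le> n}. g j l)"
    by (rule sum.triangle_reindex_eq[symmetric])
  also have "\<dots> = (\<Sum>j\<le>n. \<Sum>l\<le>n - j. g j l)"
  proof -
    have "{(j,l). j + l \<le> n} = Sigma {..n} (\<lambda>j. {..n - j})" by auto
    thus ?thesis by (simp add: sum.Sigma)
  qed
  also have "\<dots> = sp_mult h a (sp_mult h b c) n"
    unfolding sp_mult_def g_def
    by (intro sum.cong refl)
       (simp add: shift.hom_sum shift.hom_mult shift_shift sum_distrib_left mult.assoc diff_diff_add)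
  finally show "sp_mult h (sp_mult h a b) c n = sp_mult h a (sp_mult h b c) n" .
qed

lemma sp_mult_one_left [simp]: "sp_mult h sp_one a = a"
proof
  fix n
  have "sp_mult h sp_one a n = (\<Sum>i\<le>n. if i = 0 then a n else 0)"
    unfolding sp_mult_def sp_one_def by (intro sum.cong refl) auto
  thus "sp_mult h sp_one a n = a n" by simp
qed

lemma sp_mult_one_right [simp]: "sp_mult h a sp_one = a"
proof
  fix n
  have "sp_mult h a sp_one n = (\<Sum>i\<le>n. if i = n then a n else 0)"
    unfolding sp_mult_def sp_one_def by (intro sum.cong refl) auto
  thus "sp_mult h a sp_one n = a n" by simp
qed

lemma sp_mult_0: "sp_mult h a b 0 = a 0 * b 0"
  by (simp add: sp_mult_def)

text \<open>The guard in the recursive call only serves the termination proof.\<close>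

fun sp_right_inverse :: "complex \<Rightarrow> (nat \<Rightarrow> K) \<Rightarrow> nat \<Rightarrow> K" where
  "sp_right_inverse h a n =
     (sp_one n - (\<Sum>i\<in>{1..n}. a i * shift h i
        (if 0 < i \<and> i \<le> n then sp_right_inverse h a (n - i) else 0))) / a 0"

declare sp_right_inverse.simps [simp del]

lemma sp_mult_sp_right_inverse:
  assumes a0: "a 0 \<noteq> 0"
  shows "sp_mult h a (sp_right_inverse h a) = sp_one"
proof
  fix n :: nat
  have "(\<Sum>i\<in>{1..n}. a i * shift h i (if 0 < i \<and> i \<le> n then sp_right_inverse h a (n - i) else 0))
      = (\<Sum>i\<in>{1..n}. a i * shift h i (sp_right_inverse h a (n - i)))"
    by (intro sum.cong refl) auto
  hence rec: "a 0 * sp_right_inverse h a n =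
      sp_one n - (\<Sum>i\<in>{1..n}. a i * shift h i (sp_right_inverse h a (n - i)))"
    using a0 by (subst sp_right_inverse.simps) simp
  have "{..n} = insert 0 {1..n}" by (auto simp: not_less_eq_eq)
  hence "sp_mult h a (sp_right_inverse h a) n =
      a 0 * sp_right_inverse h a n + (\<Sum>i\<in>{1..n}. a i * shift h i (sp_right_inverse h a (n - i)))"
    unfolding sp_mult_def by simp
  thus "sp_mult h a (sp_right_inverse h a) n = sp_one n" using rec by simp
qed

text \<open>A right inverse \<open>b\<close> of \<open>a\<close> has itself a right inverse, which must be \<open>a\<close>.\<close>

lemma sp_mult_sp_inv:
  assumes "a 0 \<noteq> 0"
  shows sp_mult_sp_inv_right: "sp_mult h a (sp_inv h a) = sp_one"
    and sp_mult_sp_inv_left: "sp_mult h (sp_inv h a) a = sp_one"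
proof -
  define b where "b = sp_right_inverse h a"
  have ab: "sp_mult h a b = sp_one" using sp_mult_sp_right_inverse[of a h, OF assms] b_def by simp
  have "a 0 * b 0 = 1" using arg_cong[OF ab, of "\<lambda>f. f 0"] by (simp add: sp_mult_0 sp_one_def)
  hence "b 0 \<noteq> 0" by auto
  hence bb: "sp_mult h b (sp_right_inverse h b) = sp_one" by (rule sp_mult_sp_right_inverse)
  have "sp_mult h (sp_mult h a b) (sp_right_inverse h b) = a" using bb by (simp add: sp_mult_assoc)
  hence ba: "sp_mult h b a = sp_one" using ab bb by simp
  have "c = b" if "sp_mult h a c = sp_one" for c
  proof -
    have "c = sp_mult h (sp_mult h b a) c" using ba by simp
    also have "\<dots> = b" by (simp add: sp_mult_assoc that)
    finally show ?thesis .
  qed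
  hence "sp_inv h a = b" unfolding sp_inv_def using ab by blast
  thus "sp_mult h a (sp_inv h a) = sp_one" "sp_mult h (sp_inv h a) a = sp_one"
    using ab ba by simp_all
qed

lemma sp_mult_sp_inv_cancel_left:
  assumes "a 0 \<noteq> 0" shows "sp_mult h (sp_inv h a) (sp_mult h a x) = x"
  by (simp add: sp_mult_assoc[symmetric] sp_mult_sp_inv_left[of a h, OF assms])

lemma sp_inv_mult:
  assumes a: "a 0 \<noteq> 0" and b: "b 0 \<noteq> 0"
  shows "sp_inv h (sp_mult h a b) = sp_mult h (sp_inv h b) (sp_inv h a)"
proof -
  have ab: "sp_mult h a b 0 \<noteq> 0" using a b by (simp add: sp_mult_0)
  have "sp_mult h (sp_mult h a b) (sp_mult h (sp_inv h b) (sp_inv h a))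
      = sp_mult h a (sp_mult h (sp_mult h b (sp_inv h b)) (sp_inv h a))"
    by (simp add: sp_mult_assoc)
  also have "\<dots> = sp_one" using a b by (simp add: sp_mult_sp_inv_right)
  finally have "sp_mult h (sp_mult h a b) (sp_mult h (sp_inv h b) (sp_inv h a)) = sp_one" .
  hence "sp_inv h (sp_mult h a b) = sp_mult h (sp_inv h (sp_mult h a b))
           (sp_mult h (sp_mult h a b) (sp_mult h (sp_inv h b) (sp_inv h a)))"
    by simp
  thus ?thesis by (simp only: sp_mult_sp_inv_cancel_left[of "sp_mult h a b" h, OF ab])
qed

lemma sp_prod_Nil [simp]: "sp_prod h [] = sp_one"
  by (simp add: sp_prod_def)

lemma sp_prod_Cons [simp]: "sp_prod h (x # xs) = sp_mult h x (sp_prod h xs)"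
  by (simp add: sp_prod_def)

section \<open>Difference operators acting on \<open>\<complex>(x)\<close>\<close>

definition ord_le :: "nat \<Rightarrow> (nat \<Rightarrow> K) \<Rightarrow> bool" where
  "ord_le k D \<longleftrightarrow> (\<forall>j>k. D j = 0)"

lemma ord_le_is_diff_op: "ord_le k D \<Longrightarrow> is_diff_op D"
  unfolding ord_le_def is_diff_op_def
  by (rule finite_subset[of _ "{..k}"]) (auto simp: not_le[symmetric])

lemma ord_le_op_ord: "is_diff_op D \<Longrightarrow> ord_le (op_ord D) D"
  unfolding ord_le_def is_diff_op_def op_ord_def
  by (metis (mono_tags, lifting) Max_ge mem_Collect_eq not_le)

lemma op_ord_less:
  assumes "\<And>j. j \<ge> k \<Longrightarrow> D j = 0" and "D 0 \<noteq> 0"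
  shows "op_ord D < k"
proof -
  have fin: "finite {j. D j \<noteq> 0}"
    by (rule finite_subset[of _ "{..<k}"]) (use assms in \<open>auto simp: not_less[symmetric]\<close>)
  have "op_ord D \<in> {j. D j \<noteq> 0}"
    unfolding op_ord_def using assms(2) by (intro Max_in[OF fin]) auto
  thus ?thesis using assms(1) by (metis mem_Collect_eq not_less)
qed

lemma ord_le_sp_mult:
  assumes "ord_le k1 a" "ord_le k2 b"
  shows "ord_le (k1 + k2) (sp_mult h a b)"
  unfolding ord_le_def
proof (intro allI impI)
  fix n assume n: "n > k1 + k2"
  have "a i * shift h i (b (n - i)) = 0" for i
    using assms n unfolding ord_le_def by (cases "i > k1") auto
  thus "sp_mult h a b n = 0" unfolding sp_mult_def by (intro sum.neutral) simp
qed

lemma ord_le_one_minus_tau: "ord_le 1 (one_minus_tau f)"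
  by (simp add: ord_le_def one_minus_tau_def)

lemma one_minus_tau_0 [simp]: "one_minus_tau f 0 = 1"
  by (simp add: one_minus_tau_def)

lemma op_apply_ord_le:
  assumes "ord_le k D"
  shows "op_apply h D f = (\<Sum>j\<le>k. D j * shift h j f)"
  unfolding op_apply_def
  by (rule sum.mono_neutral_left) (use assms in \<open>auto simp: ord_le_def not_le[symmetric]\<close>)

lemma op_apply_uminus: "op_apply h D (- x) = - op_apply h D x"
  by (simp add: op_apply_def shift.hom_uminus sum_negf)

lemma op_apply_kconst_mult: "op_apply h D (kconst c * x) = kconst c * op_apply h D x"
  by (simp add: op_apply_def shift.hom_mult sum_distrib_left mult_ac)

lemma op_apply_sum: "op_apply h D (\<Sum>i\<in>A. g i) = (\<Sum>i\<in>A. op_apply h D (g i))"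
  unfolding op_apply_def by (simp add: shift.hom_sum sum_distrib_left) (rule sum.swap)

lemma op_apply_sp_mult:
  assumes A: "ord_le k1 A" and B: "ord_le k2 B"
  shows "op_apply h (sp_mult h A B) f = op_apply h A (op_apply h B f)"
proof -
  define g where "g = (\<lambda>i j. A i * shift h i (B j) * shift h (i + j) f)"
  have "op_apply h (sp_mult h A B) f = (\<Sum>n\<le>k1+k2. sp_mult h A B n * shift h n f)"
    by (rule op_apply_ord_le[OF ord_le_sp_mult[OF A B]])
  also have "\<dots> = (\<Sum>n\<le>k1+k2. \<Sum>i\<le>n. g i (n - i))"
    unfolding sp_mult_def g_def by (intro sum.cong refl) (simp add: sum_distrib_right)
  also have "\<dots> = (\<Sum>(i,j)\<in>{(i,j). i + j \<le> k1+k2}. g i j)"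
    by (rule sum.triangle_reindex_eq[symmetric])
  also have "\<dots> = (\<Sum>(i,j)\<in>{..k1} \<times> {..k2}. g i j)"
  proof (rule sum.mono_neutral_right)
    show "finite {(i,j). i + j \<le> k1 + k2}"
      by (rule finite_subset[of _ "{..k1+k2} \<times> {..k1+k2}"]) auto
    show "\<forall>x\<in>{(i, j). i + j \<le> k1 + k2} - {..k1} \<times> {..k2}. (case x of (i, j) \<Rightarrow> g i j) = 0"
      using A B unfolding ord_le_def g_def by (auto simp: not_le) (meson not_le)+
  qed auto
  also have "\<dots> = op_apply h A (op_apply h B f)"
    unfolding op_apply_ord_le[OF A] op_apply_ord_le[OF B] g_def sum.cartesian_product[symmetric]
    by (simp add: shift.hom_sum shift.hom_mult shift_shift sum_distrib_left mult.assoc)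
  finally show ?thesis .
qed

lemma op_apply_one_minus_tau: "op_apply h (one_minus_tau g) y = y - g * shift h 1 y"
proof -
  have "{..1::nat} = {0, 1}" by auto
  thus ?thesis unfolding op_apply_ord_le[OF ord_le_one_minus_tau] by (simp add: one_minus_tau_def)
qed

text \<open>
  Division of \<open>D\<close> by \<open>1 - (w / w[1]) \<tau>\<close> on the right: the coefficients of the quotient are
  the partial sums \<open>\<Sum>\<^sub>j\<^sub>\<le>\<^sub>n D\<^sub>j w[j]\<close>, divided by \<open>w[n]\<close>; they vanish from \<open>k\<close> on because \<open>D w = 0\<close>.
\<close>

lemma right_factor_one_minus_tau:
  assumes D: "ord_le k D" and D0: "D 0 = 1" and Dw: "op_apply h D w = 0" and w: "w \<noteq> 0"
  obtains P where "\<And>j. j \<ge> k \<Longrightarrow> P j = 0" "P 0 = 1"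
    "D = sp_mult h P (one_minus_tau (w / shift h 1 w))"
proof
  define S where "S = (\<lambda>n. \<Sum>j\<le>n. D j * shift h j w)"
  define P where "P = (\<lambda>n. S n / shift h n w)"
  show Pk: "P j = 0" if "j \<ge> k" for j
  proof -
    have "S j = (\<Sum>j\<le>k. D j * shift h j w)" unfolding S_def
      by (rule sum.mono_neutral_right) (use that D in \<open>auto simp: ord_le_def\<close>)
    thus ?thesis using Dw op_apply_ord_le[OF D] by (simp add: P_def)
  qed
  show P0: "P 0 = 1" using w D0 by (simp add: P_def S_def)
  let ?g = "w / shift h 1 w"
  show "D = sp_mult h P (one_minus_tau ?g)"
  proof
    fix n :: nat
    show "D n = sp_mult h P (one_minus_tau ?g) n"
    proof (cases n)
      case 0 then show ?thesis using P0 D0 by (simp add: sp_mult_0)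
    next
      case (Suc m)
      have z: "(\<Sum>i<m. P i * shift h i (one_minus_tau ?g (Suc m - i))) = 0"
        by (intro sum.neutral) (auto simp: one_minus_tau_def)
      have "sp_mult h P (one_minus_tau ?g) (Suc m) = P m * shift h m (- ?g) + P (Suc m)"
        unfolding sp_mult_def atMost_Suc lessThan_Suc_atMost[symmetric]
        by (simp add: sum.insert z one_minus_tau_def Suc_diff_le)
      also have "\<dots> = (S (Suc m) - S m) / shift h (Suc m) w"
        using w by (simp add: P_def shift.hom_uminus shift.hom_div shift_shift field_simps)
      also have "\<dots> = D (Suc m)"
        using w by (simp add: S_def)
      finally show ?thesis using Suc by simp
    qed
  qed
qed

lemma minimal_fraction_kernels_disjoint:
  assumes D0: "ord_le m D0" "D0 0 = 1" and D1: "ord_le n D1" "D1 0 = 1"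
    and minimal: "\<And>E0 E1. is_diff_op E0 \<Longrightarrow> is_diff_op E1 \<Longrightarrow> E1 \<noteq> (\<lambda>_. 0) \<Longrightarrow>
                     sp_mult h (sp_mult h D0 (sp_inv h D1)) E1 = E0 \<Longrightarrow> n \<le> op_ord E1"
    and w0: "op_apply h D0 w = 0" and w1: "op_apply h D1 w = 0"
  shows "w = 0"
proof (rule ccontr)
  assume w: "w \<noteq> 0"
  let ?d = "one_minus_tau (w / shift h 1 w)"
  obtain Q where Q: "\<And>j. j \<ge> m \<Longrightarrow> Q j = 0" "D0 = sp_mult h Q ?d"
    using right_factor_one_minus_tau[OF D0 w0 w] by metis
  obtain P where P: "\<And>j. j \<ge> n \<Longrightarrow> P j = 0" "P 0 = 1" "D1 = sp_mult h P ?d"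
    using right_factor_one_minus_tau[OF D1 w1 w] by metis
  have "sp_inv h D1 = sp_mult h (sp_inv h ?d) (sp_inv h P)"
    using P(2,3) by (simp add: sp_inv_mult)
  hence "sp_mult h (sp_mult h D0 (sp_inv h D1)) P =
        sp_mult h (sp_mult h Q (sp_mult h ?d (sp_inv h ?d))) (sp_mult h (sp_inv h P) P)"
    unfolding Q(2) by (simp add: sp_mult_assoc)
  also have "\<dots> = Q" using P(2) by (simp add: sp_mult_sp_inv_left sp_mult_sp_inv_right)
  finally have "sp_mult h (sp_mult h D0 (sp_inv h D1)) P = Q" .
  moreover have "ord_le m Q" "ord_le n P" using Q(1) P(1) by (simp_all add: ord_le_def)
  moreover have "P \<noteq> (\<lambda>_. 0)" using P(2) by (auto dest: fun_cong[of _ _ 0])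
  ultimately have "n \<le> op_ord P" by (intro minimal) (auto intro: ord_le_is_diff_op)
  moreover have "op_ord P < n" by (rule op_ord_less) (use P in auto)
  ultimately show False by simp
qed

section \<open>Casoratians\<close>

definition Wmat :: "complex \<Rightarrow> K list \<Rightarrow> K mat" where
  "Wmat h gs = mat (length gs) (length gs) (\<lambda>(i, j). shift h i (gs ! j))"

lemma Wr_eq_det_Wmat: "Wr h gs = det (Wmat h gs)"
  by (simp add: Wr_def Wmat_def)

lemma Wmat_carrier: "Wmat h gs \<in> carrier_mat (length gs) (length gs)"
  by (simp add: Wmat_def)

lemma Wmat_index [simp]:
  "i < length gs \<Longrightarrow> j < length gs \<Longrightarrow> Wmat h gs $$ (i, j) = shift h i (gs ! j)"
  by (simp add: Wmat_def)

lemma Wmat_dim [simp]: "dim_row (Wmat h gs) = length gs" "dim_col (Wmat h gs) = length gs"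
  by (simp_all add: Wmat_def)

lemma Wr_Nil: "Wr h [] = 1"
  by (simp add: Wr_def det_def)

lemma det_nonzero_kernel_trivial:
  fixes A :: "'a :: field mat"
  assumes A: "A \<in> carrier_mat k k" "det A \<noteq> 0"
    and Ac: "\<And>i. i < k \<Longrightarrow> (\<Sum>j<k. A $$ (i, j) * c j) = 0" and j: "j < k"
  shows "c j = 0"
proof -
  have "A *\<^sub>v vec k c = 0\<^sub>v k"
    using A(1) Ac by (intro eq_vecI) (simp_all add: scalar_prod_def atLeast0LessThan)
  moreover have "vec k c \<in> carrier_vec k" by simp
  ultimately have "vec k c = 0\<^sub>v k" using det_0_iff_vec_prod_zero_field[OF A(1)] A(2) by blast
  thus ?thesis using j by (metis index_vec index_zero_vec(1))
qed

lemma Wr_nonzero_columns_indep: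
  assumes W: "Wr h ws \<noteq> 0"
    and rel: "\<And>i. i < length ws \<Longrightarrow> (\<Sum>j<length ws. shift h (t + i) (ws ! j) * c j) = 0"
    and j: "j < length ws"
  shows "c j = 0"
proof (rule det_nonzero_kernel_trivial[OF _ _ _ j])
  show "map_mat (shift h t) (Wmat h ws) \<in> carrier_mat (length ws) (length ws)"
    using Wmat_carrier by simp
  show "det (map_mat (shift h t) (Wmat h ws)) \<noteq> 0" using W by (simp add: Wr_eq_det_Wmat)
qed (use rel in \<open>simp add: shift_shift\<close>)

lemma Wr_nonzero_rows_indep:
  assumes W: "Wr h ws \<noteq> 0"
    and rel: "\<And>i. i < length ws \<Longrightarrow> (\<Sum>j<length ws. shift h (t + j) (ws ! i) * c j) = 0"
    and j: "j < length ws"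
  shows "c j = 0"
proof (rule det_nonzero_kernel_trivial[OF _ _ _ j])
  have M: "map_mat (shift h t) (Wmat h ws) \<in> carrier_mat (length ws) (length ws)"
    using Wmat_carrier by simp
  thus "transpose_mat (map_mat (shift h t) (Wmat h ws)) \<in> carrier_mat (length ws) (length ws)"
    by simp
  show "det (transpose_mat (map_mat (shift h t) (Wmat h ws))) \<noteq> 0"
    using W by (simp add: det_transpose[OF M] Wr_eq_det_Wmat)
qed (use rel in \<open>simp add: shift_shift\<close>)

definition const_indep :: "K list \<Rightarrow> bool" where
  "const_indep ws \<longleftrightarrow>
     (\<forall>c. (\<Sum>j<length ws. kconst (c j) * ws ! j) = 0 \<longrightarrow> (\<forall>j<length ws. c j = 0))"

lemma sum_lessThan_add:
  fixes a b :: nat shows "(\<Sum>j<a + b. g j) = (\<Sum>j<a. g j) + (\<Sum>j<b. g (a + j))"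
  by (induction b) (simp_all add: add.assoc)

lemma const_indep_drop_middle:
  assumes "const_indep (xs @ ys @ zs)" shows "const_indep (xs @ zs)"
  unfolding const_indep_def
proof (rule allI, rule impI)
  fix c :: "nat \<Rightarrow> complex"
  assume c: "(\<Sum>j<length (xs @ zs). kconst (c j) * (xs @ zs) ! j) = 0"
  define c' where "c' = (\<lambda>j. if j < length xs then c j
                            else if j < length xs + length ys then 0 else c (j - length ys))"
  have "(\<Sum>j<length (xs @ ys @ zs). kconst (c' j) * (xs @ ys @ zs) ! j) =
        (\<Sum>j<length xs. kconst (c' j) * xs ! j) +
        ((\<Sum>j<length ys. kconst (c' (length xs + j)) * ys ! j) +
         (\<Sum>j<length zs. kconst (c' (length xs + (length ys + j))) * zs ! j))"
    by (simp add: sum_lessThan_add nth_append)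
  also have "\<dots> = (\<Sum>j<length xs. kconst (c j) * xs ! j) +
                  (\<Sum>j<length zs. kconst (c (length xs + j)) * zs ! j)"
    by (simp add: c'_def)
  also have "\<dots> = 0" using c by (simp add: sum_lessThan_add nth_append)
  finally have c': "\<forall>j<length (xs @ ys @ zs). c' j = 0"
    using assms unfolding const_indep_def by blast
  show "\<forall>j<length (xs @ zs). c j = 0"
  proof (intro allI impI)
    fix j assume j: "j < length (xs @ zs)"
    show "c j = 0"
    proof (cases "j < length xs")
      case True thus ?thesis using c'[rule_format, of j] by (simp add: c'_def)
    next
      case False
      thus ?thesis using c'[rule_format, of "j + length ys"] j by (simp add: c'_def)
    qed
  qed
qed

lemma const_indep_prefix: "const_indep (xs @ ys) \<Longrightarrow> const_indep xs"
  using const_indep_drop_middle[of xs ys "[]"] by simp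

lemma const_indep_take_append:
  assumes "const_indep (xs @ ys)" shows "const_indep (take a xs @ take b ys)"
proof -
  have "const_indep ((take a xs @ drop a xs) @ (take b ys @ drop b ys))" using assms by simp
  hence "const_indep (take a xs @ drop a xs @ take b ys @ drop b ys)" by (simp only: append.assoc)
  hence "const_indep ((take a xs @ take b ys) @ drop b ys)"
    by (metis append.assoc const_indep_drop_middle)
  thus ?thesis by (rule const_indep_prefix)
qed

text \<open>
  If \<open>Wr(ws) \<noteq> 0\<close> but \<open>Wr(ws, w) = 0\<close>, normalize a kernel vector \<open>e\<close> of the Casoratian matrix
  by \<open>e\<^sub>k = 1\<close>. Subtracting the shifted relations gives a relation among the columns of the
  shifted matrix of \<open>ws\<close> with coefficients \<open>e\<^sub>j - e\<^sub>j[1]\<close>, so all \<open>e\<^sub>j\<close> are shift invariant,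
  i.e. constants, and \<open>ws, w\<close> is dependent.
\<close>

lemma Wr_snoc_eq_0_kernel:
  assumes W: "Wr h ws \<noteq> 0" and W0: "Wr h (ws @ [w]) = 0"
  obtains e where "e (length ws) = 1"
    "\<And>i. i < Suc (length ws) \<Longrightarrow> (\<Sum>j<Suc (length ws). shift h i ((ws @ [w]) ! j) * e j) = 0"
proof -
  define k where "k = length ws"
  let ?M = "Wmat h (ws @ [w])"
  have Mc: "?M \<in> carrier_mat (Suc k) (Suc k)" using Wmat_carrier[of h "ws @ [w]"] by (simp add: k_def)
  obtain c where c: "c \<in> carrier_vec (Suc k)" "c \<noteq> 0\<^sub>v (Suc k)" "?M *\<^sub>v c = 0\<^sub>v (Suc k)"
    using det_0_iff_vec_prod_zero_field[OF Mc] W0 unfolding Wr_eq_det_Wmat by blast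
  have R: "(\<Sum>j<Suc k. shift h i ((ws @ [w]) ! j) * c $ j) = 0" if i: "i < Suc k" for i
  proof -
    have "(?M *\<^sub>v c) $ i = 0" using c(3) i by simp
    thus ?thesis using i c(1) by (simp add: scalar_prod_def atLeast0LessThan k_def)
  qed
  have ck: "c $ k \<noteq> 0"
  proof
    assume ck0: "c $ k = 0"
    have "c $ j = 0" if "j < k" for j
    proof (rule Wr_nonzero_columns_indep[OF W, of 0, folded k_def, OF _ that])
      fix i assume "i < k"
      thus "(\<Sum>j<k. shift h (0 + i) (ws ! j) * c $ j) = 0"
        using R[of i] ck0 by (simp add: nth_append k_def)
    qed
    hence "c = 0\<^sub>v (Suc k)" using ck0 c(1) by (intro eq_vecI) (auto simp: less_Suc_eq)
    thus False using c(2) by simp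
  qed
  show thesis
  proof (rule that[of "\<lambda>j. c $ j / c $ k"])
    show "c $ length ws / c $ k = 1" using ck by (simp add: k_def)
  next
    fix i assume i: "i < Suc (length ws)"
    have "(\<Sum>j<Suc k. shift h i ((ws @ [w]) ! j) * (c $ j / c $ k))
        = (\<Sum>j<Suc k. shift h i ((ws @ [w]) ! j) * c $ j) / c $ k"
      by (simp only: times_divide_eq_right sum_divide_distrib)
    thus "(\<Sum>j<Suc (length ws). shift h i ((ws @ [w]) ! j) * (c $ j / c $ k)) = 0"
      using R i by (simp add: k_def)
  qed
qed

lemma Wr_nonzero_if_const_indep:
  assumes h: "h \<noteq> 0"
  shows "const_indep ws \<Longrightarrow> Wr h ws \<noteq> 0"
proof (induction ws rule: rev_induct)
  case Nil
  then show ?case by (simp add: Wr_Nil)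
next
  case (snoc w ws)
  define k where "k = length ws"
  define xs where "xs = ws @ [w]"
  have W: "Wr h ws \<noteq> 0" using snoc const_indep_prefix by blast
  show ?case
  proof
    assume "Wr h (ws @ [w]) = 0"
    then obtain e where ek: "e k = 1"
      and R: "\<And>i. i < Suc k \<Longrightarrow> (\<Sum>j<Suc k. shift h i (xs ! j) * e j) = 0"
      using Wr_snoc_eq_0_kernel[OF W] unfolding k_def xs_def by metis
    have "e j - shift h 1 (e j) = 0" if "j < k" for j
    proof (rule Wr_nonzero_columns_indep[OF W, of 1, folded k_def, OF _ that])
      fix i assume i: "i < k"
      have "(\<Sum>j<Suc k. shift h (Suc i) (xs ! j) * shift h 1 (e j))
          = shift h 1 (\<Sum>j<Suc k. shift h i (xs ! j) * e j)"
        by (simp add: shift.hom_sum shift.hom_mult shift_shift del: sum.lessThan_Suc)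
      hence "(\<Sum>j<Suc k. shift h (Suc i) (xs ! j) * (e j - shift h 1 (e j))) = 0"
        using R[of i] R[of "Suc i"] i by (simp add: right_diff_distrib sum_subtractf)
      thus "(\<Sum>j<k. shift h (1 + i) (ws ! j) * (e j - shift h 1 (e j))) = 0"
        using ek by (simp add: xs_def k_def nth_append)
    qed
    hence "\<exists>g. e j = kconst g" if "j < Suc k" for j
      using that ek by (intro shift_invariant_is_kconst[OF h]) (auto simp: less_Suc_eq)
    then obtain \<gamma> where \<gamma>: "\<And>j. j < Suc k \<Longrightarrow> e j = kconst (\<gamma> j)" by metis
    have "(\<Sum>j<length xs. kconst (\<gamma> j) * xs ! j) = 0"
      using R[of 0] \<gamma> by (simp add: xs_def k_def mult.commute del: sum.lessThan_Suc)
    hence "\<gamma> k = 0" using snoc.prems unfolding const_indep_def xs_def k_def by simp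
    thus False using \<gamma>[of k] ek by simp
  qed
qed

section \<open>The operator annihilating a list with nonzero Casoratian\<close>

definition insert_at :: "nat \<Rightarrow> 'a \<Rightarrow> 'a list \<Rightarrow> 'a list" where
  "insert_at p y ws = take p ws @ y # drop p ws"

lemma length_insert_at [simp]: "p \<le> length ws \<Longrightarrow> length (insert_at p y ws) = Suc (length ws)"
  by (simp add: insert_at_def)

lemma nth_insert_at:
  "p \<le> length ws \<Longrightarrow> q \<le> length ws \<Longrightarrow>
   insert_at p y ws ! q = (if q < p then ws ! q else if q = p then y else ws ! (q - 1))"
  by (auto simp: insert_at_def nth_append min_def nth_Cons' not_less)

lemma set_insert_at: "p \<le> length ws \<Longrightarrow> set (insert_at p y ws) = insert y (set ws)"
  by (metis append_take_drop_id insert_at_def set_append set_simps(2) Un_insert_right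
      Un_insert_left)

text \<open>
  The coefficients of \<open>cofactor_op h p ws\<close> are the cofactors along column \<open>p\<close> of the Casoratian
  matrix of \<open>ws\<close> with an arbitrary function inserted at position \<open>p\<close> (they do not depend on it),
  divided by the cofactor at row 0, which is \<open>(-1)\<^sup>p Wr(ws)[1]\<close>.
\<close>

definition cofactor_op :: "complex \<Rightarrow> nat \<Rightarrow> K list \<Rightarrow> nat \<Rightarrow> K" where
  "cofactor_op h p ws j =
     (if j \<le> length ws
      then (-1)^p * cofactor (Wmat h (insert_at p 0 ws)) j p / shift h 1 (Wr h ws) else 0)"

lemma ord_le_cofactor_op: "ord_le (length ws) (cofactor_op h p ws)"
  by (simp add: ord_le_def cofactor_op_def)

lemma cofactor_Wmat_insert_at:
  assumes p: "p \<le> length ws"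
  shows "cofactor (Wmat h (insert_at p y ws)) j p = cofactor (Wmat h (insert_at p 0 ws)) j p"
proof -
  have "mat_delete (Wmat h (insert_at p y ws)) j p = mat_delete (Wmat h (insert_at p 0 ws)) j p"
    by (rule eq_matI) (use p in \<open>auto simp: mat_delete_def nth_insert_at\<close>)
  thus ?thesis unfolding cofactor_def by simp
qed

lemma op_apply_cofactor_op:
  assumes p: "p \<le> length ws"
  shows "op_apply h (cofactor_op h p ws) y = (-1)^p * Wr h (insert_at p y ws) / shift h 1 (Wr h ws)"
proof -
  let ?k = "length ws"
  let ?A = "Wmat h (insert_at p y ws)"
  let ?C = "\<lambda>i. cofactor (Wmat h (insert_at p 0 ws)) i p"
  have A: "?A \<in> carrier_mat (Suc ?k) (Suc ?k)" using Wmat_carrier[of h "insert_at p y ws"] p by simp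
  have "Wr h (insert_at p y ws) = (\<Sum>i<Suc ?k. ?A $$ (i, p) * cofactor ?A i p)"
    unfolding Wr_eq_det_Wmat by (rule laplace_expansion_column[OF A]) (use p in simp)
  also have "\<dots> = (\<Sum>i\<le>?k. shift h i y * ?C i)"
    using p by (intro sum.cong)
      (auto simp: nth_insert_at cofactor_Wmat_insert_at[OF p, where y=y] lessThan_Suc_atMost)
  finally have W: "Wr h (insert_at p y ws) = (\<Sum>i\<le>?k. shift h i y * ?C i)" .
  have "op_apply h (cofactor_op h p ws) y = (\<Sum>j\<le>?k. cofactor_op h p ws j * shift h j y)"
    by (rule op_apply_ord_le[OF ord_le_cofactor_op])
  also have "\<dots> = (\<Sum>j\<le>?k. (-1)^p * (shift h j y * ?C j) / shift h 1 (Wr h ws))"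
    by (intro sum.cong refl) (simp add: cofactor_op_def)
  also have "\<dots> = (-1)^p * Wr h (insert_at p y ws) / shift h 1 (Wr h ws)"
    unfolding W by (simp add: sum_divide_distrib sum_distrib_left)
  finally show ?thesis .
qed

lemma cofactor_op_0:
  assumes p: "p \<le> length ws" and W: "Wr h ws \<noteq> 0"
  shows "cofactor_op h p ws 0 = 1"
proof -
  have "mat_delete (Wmat h (insert_at p 0 ws)) 0 p = map_mat (shift h 1) (Wmat h ws)"
    by (rule eq_matI) (use p in \<open>auto simp: mat_delete_def nth_insert_at shift_shift\<close>)
  hence "cofactor (Wmat h (insert_at p 0 ws)) 0 p = (-1)^p * shift h 1 (Wr h ws)"
    unfolding cofactor_def Wr_eq_det_Wmat by simp
  moreover have "((-1::K)^p) * (-1)^p = 1" by (simp flip: power_add)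
  ultimately show ?thesis using W by (simp add: cofactor_op_def mult.assoc[symmetric])
qed

lemma Wr_insert_at_member:
  assumes p: "p \<le> length ws" and x: "x \<in> set ws"
  shows "Wr h (insert_at p x ws) = 0"
proof -
  obtain q where q: "q < length ws" "ws ! q = x" using x by (auto simp: in_set_conv_nth)
  define q' where "q' = (if q < p then q else Suc q)"
  have q': "q' \<noteq> p" "q' < Suc (length ws)" using q by (auto simp: q'_def)
  show ?thesis unfolding Wr_eq_det_Wmat
  proof (rule det_identical_columns[OF Wmat_carrier q'(1)])
    show "q' < length (insert_at p x ws)" "p < length (insert_at p x ws)" using q' p by auto
    show "col (Wmat h (insert_at p x ws)) q' = col (Wmat h (insert_at p x ws)) p"
      using q q' p by (intro eq_vecI) (auto simp: nth_insert_at q'_def)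
  qed
qed

lemma cofactor_op_kills:
  "p \<le> length ws \<Longrightarrow> x \<in> set ws \<Longrightarrow> op_apply h (cofactor_op h p ws) x = 0"
  by (simp add: op_apply_cofactor_op Wr_insert_at_member)

text \<open>The kernel condition is a linear system for the coefficients \<open>1, \<dots>, k\<close> whose matrix is
  the transposed shifted Casoratian matrix.\<close>

lemma ord_le_kernel_unique:
  assumes W: "Wr h ws \<noteq> 0"
    and D: "ord_le (length ws) D" and E: "ord_le (length ws) E" and DE0: "D 0 = E 0"
    and kD: "\<And>x. x \<in> set ws \<Longrightarrow> op_apply h D x = 0"
    and kE: "\<And>x. x \<in> set ws \<Longrightarrow> op_apply h E x = 0"
  shows "D = E"
proof
  fix j
  let ?k = "length ws"
  have rel: "(\<Sum>j<?k. shift h (1 + j) (ws ! i) * (D (Suc j) - E (Suc j))) = 0"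
    if i: "i < ?k" for i
  proof -
    have "0 = op_apply h D (ws ! i) - op_apply h E (ws ! i)" using kD kE i by simp
    also have "\<dots> = (\<Sum>j\<le>?k. (D j - E j) * shift h j (ws ! i))"
      unfolding op_apply_ord_le[OF D] op_apply_ord_le[OF E]
      by (simp add: sum_subtractf left_diff_distrib)
    also have "\<dots> = (\<Sum>j<?k. (D (Suc j) - E (Suc j)) * shift h (Suc j) (ws ! i))"
      by (subst sum.atMost_shift) (simp add: DE0)
    finally show ?thesis by (simp add: mult.commute)
  qed
  show "D j = E j"
  proof (cases j)
    case (Suc j')
    show ?thesis
    proof (cases "j' < ?k")
      case True
      thus ?thesis using Wr_nonzero_rows_indep[OF W rel True] Suc by simp
    next
      case False
      thus ?thesis using D E Suc by (simp add: ord_le_def)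
    qed
  qed (use DE0 in simp)
qed

definition annihilator :: "complex \<Rightarrow> K list \<Rightarrow> nat \<Rightarrow> K" where
  "annihilator h ws = cofactor_op h 0 ws"

lemma annihilator:
  assumes "Wr h ws \<noteq> 0"
  shows ord_le_annihilator: "ord_le (length ws) (annihilator h ws)"
    and annihilator_0: "annihilator h ws 0 = 1"
    and annihilator_kills: "\<And>x. x \<in> set ws \<Longrightarrow> op_apply h (annihilator h ws) x = 0"
  unfolding annihilator_def
  using ord_le_cofactor_op cofactor_op_0[OF _ assms] cofactor_op_kills by auto

lemma annihilator_unique:
  assumes W: "Wr h ws \<noteq> 0"
    and D: "ord_le (length ws) D" "D 0 = 1" "\<And>x. x \<in> set ws \<Longrightarrow> op_apply h D x = 0"
  shows "D = annihilator h ws"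
  using assms annihilator[OF W] by (intro ord_le_kernel_unique[OF W]) auto

lemma op_apply_annihilator:
  assumes p: "p \<le> length ws" and W: "Wr h ws \<noteq> 0"
  shows "op_apply h (annihilator h ws) y = (-1)^p * Wr h (insert_at p y ws) / shift h 1 (Wr h ws)"
proof -
  have "cofactor_op h p ws = annihilator h ws"
    using W p by (intro annihilator_unique ord_le_cofactor_op cofactor_op_0 cofactor_op_kills)
  thus ?thesis using op_apply_cofactor_op[OF p, where h=h and y=y] by simp
qed

text \<open>
  With \<open>X = Wr(ws')/Wr(ws)[1]\<close> the old operator maps the new function to \<open>\<plusminus>X\<close>, and
  \<open>1 - ln'(X) \<tau>\<close> kills \<open>X\<close>.
\<close>

lemma annihilator_insert_at:
  assumes p: "p \<le> length ws" and W: "Wr h ws \<noteq> 0" and W': "Wr h (insert_at p w ws) \<noteq> 0"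
  shows "annihilator h (insert_at p w ws) =
    sp_mult h (one_minus_tau (lnd h (Wr h (insert_at p w ws) / shift h 1 (Wr h ws))))
      (annihilator h ws)"
proof -
  define X where "X = Wr h (insert_at p w ws) / shift h 1 (Wr h ws)"
  let ?R = "sp_mult h (one_minus_tau (lnd h X)) (annihilator h ws)"
  have apply_R: "op_apply h ?R x = op_apply h (annihilator h ws) x
      - lnd h X * shift h 1 (op_apply h (annihilator h ws) x)" for x
    by (simp add: op_apply_sp_mult[OF ord_le_one_minus_tau ord_le_annihilator[OF W]]
                  op_apply_one_minus_tau)
  have "op_apply h ?R x = 0" if x: "x \<in> set (insert_at p w ws)" for x
  proof (cases "x = w")
    case True
    have "op_apply h (annihilator h ws) w = (-1)^p * X"
      using op_apply_annihilator[OF p W] by (simp add: X_def)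
    hence "op_apply h ?R w = (-1)^p * X - lnd h X * shift h 1 ((-1)^p * X)"
      by (simp only: apply_R)
    moreover have "X \<noteq> 0" using W W' by (simp add: X_def)
    ultimately show ?thesis
      using True by (simp add: lnd_def shift.hom_mult shift.hom_power shift.hom_uminus)
  next
    case False
    hence "x \<in> set ws" using x set_insert_at[OF p] by auto
    thus ?thesis by (simp add: apply_R annihilator_kills[OF W])
  qed
  moreover have "ord_le (length (insert_at p w ws)) ?R"
    using ord_le_sp_mult[OF ord_le_one_minus_tau ord_le_annihilator[OF W]] p by simp
  moreover have "?R 0 = 1" using annihilator_0[OF W] by (simp add: sp_mult_0)
  ultimately show ?thesis unfolding X_def[symmetric] by (intro annihilator_unique[OF W', symmetric])
qed

section \<open>Independence of the two kernels\<close>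

lemma op_apply_const_comb:
  assumes "\<And>x. x \<in> set xs \<Longrightarrow> op_apply h D x = 0"
  shows "op_apply h D (\<Sum>j<length xs. kconst (c j) * xs ! j) = 0"
  using assms by (simp add: op_apply_sum op_apply_kconst_mult)

lemma const_indep_append:
  assumes xs: "const_indep xs" "\<And>x. x \<in> set xs \<Longrightarrow> op_apply h A x = 0"
    and ys: "const_indep ys" "\<And>y. y \<in> set ys \<Longrightarrow> op_apply h B y = 0"
    and disjoint: "\<And>w. op_apply h A w = 0 \<Longrightarrow> op_apply h B w = 0 \<Longrightarrow> w = 0"
  shows "const_indep (xs @ ys)"
  unfolding const_indep_def
proof (rule allI, rule impI)
  fix c :: "nat \<Rightarrow> complex"
  assume c: "(\<Sum>j<length (xs @ ys). kconst (c j) * (xs @ ys) ! j) = 0"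
  define X where "X = (\<Sum>j<length xs. kconst (c j) * xs ! j)"
  define Y where "Y = (\<Sum>j<length ys. kconst (c (length xs + j)) * ys ! j)"
  have XY: "X = - Y" using c by (simp add: X_def Y_def sum_lessThan_add nth_append eq_neg_iff_add_eq_0)
  have "op_apply h A X = 0" "op_apply h B Y = 0"
    unfolding X_def Y_def by (intro op_apply_const_comb xs ys; assumption)+
  hence "X = 0" using disjoint XY by (simp add: op_apply_uminus)
  hence cx: "\<forall>j<length xs. c j = 0" and cy: "\<forall>j<length ys. c (length xs + j) = 0"
    using xs(1) ys(1) XY unfolding const_indep_def X_def Y_def by auto
  show "\<forall>j<length (xs @ ys). c j = 0"
  proof (intro allI impI)
    fix j assume "j < length (xs @ ys)"
    thus "c j = 0" using cx cy[rule_format, of "j - length xs"] by (cases "j < length xs") auto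
  qed
qed

lemma basis_const_indep:
  assumes "is_basis_of v k W" shows "const_indep (map v [1..<k+1])"
  unfolding const_indep_def
proof (rule allI, rule impI)
  fix c :: "nat \<Rightarrow> complex"
  assume c: "(\<Sum>j<length (map v [1..<k+1]). kconst (c j) * map v [1..<k+1] ! j) = 0"
  have indep: "\<And>c. (\<Sum>i=1..k. kconst (c i) * v i) = 0 \<Longrightarrow> \<forall>i\<in>{1..k}. c i = 0"
    using assms unfolding is_basis_of_def by blast
  have "(\<Sum>i=1..k. kconst (c (i - 1)) * v i) = (\<Sum>j<k. kconst (c j) * v (Suc j))"
    by (simp add: sum.atLeast1_atMost_eq)
  also have "\<dots> = 0" using c by (simp del: upt_Suc)
  finally have c0: "\<forall>i\<in>{1..k}. c (i - 1) = 0" using indep[of "\<lambda>i. c (i - 1)"] by simp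
  show "\<forall>j<length (map v [1..<k+1]). c j = 0"
  proof (intro allI impI)
    fix j assume "j < length (map v [1..<k+1])"
    hence "Suc j \<in> {1..k}" by (simp del: upt_Suc)
    thus "c j = 0" using c0 by fastforce
  qed
qed

lemma basis_in_kernel:
  "is_basis_of v k (op_kernel h D) \<Longrightarrow> x \<in> set (map v [1..<k+1]) \<Longrightarrow> op_apply h D x = 0"
  unfolding is_basis_of_def op_kernel_def by auto

definition vu_list :: "(nat \<Rightarrow> K) \<Rightarrow> nat \<Rightarrow> (nat \<Rightarrow> K) \<Rightarrow> nat \<Rightarrow> K list" where
  "vu_list v a u b = map v [1..<a+1] @ map u [1..<b+1]"

lemma Wr_vu_eq: "Wr_vu h v a u b = Wr h (vu_list v a u b)"
  by (simp add: Wr_vu_def vu_list_def)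

lemma length_vu_list [simp]: "length (vu_list v a u b) = a + b"
  by (simp add: vu_list_def)

lemma vu_list_Suc_left: "vu_list v (Suc a) u b = insert_at a (v (Suc a)) (vu_list v a u b)"
  by (simp add: vu_list_def insert_at_def)

lemma vu_list_Suc_right: "vu_list v a u (Suc b) = insert_at (a + b) (u (Suc b)) (vu_list v a u b)"
  by (simp add: vu_list_def insert_at_def)

lemma annihilator_vu_list_Suc_left:
  assumes "Wr_vu h v a u b \<noteq> 0" "Wr_vu h v (Suc a) u b \<noteq> 0"
  shows "annihilator h (vu_list v (Suc a) u b) =
    sp_mult h (one_minus_tau (lnd h (Wr_vu h v (a + 1) u b / shift h 1 (Wr_vu h v a u b))))
      (annihilator h (vu_list v a u b))"
  using assms annihilator_insert_at[of a "vu_list v a u b"]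
  by (simp add: Wr_vu_eq vu_list_Suc_left)

lemma annihilator_vu_list_Suc_right:
  assumes "Wr_vu h v a u b \<noteq> 0" "Wr_vu h v a u (Suc b) \<noteq> 0"
  shows "annihilator h (vu_list v a u (Suc b)) =
    sp_mult h (one_minus_tau (lnd h (Wr_vu h v a u (b + 1) / shift h 1 (Wr_vu h v a u b))))
      (annihilator h (vu_list v a u b))"
  using assms annihilator_insert_at[of "a + b" "vu_list v a u b"]
  by (simp add: Wr_vu_eq vu_list_Suc_right)

lemma basis_annihilator:
  assumes "is_basis_of v k (op_kernel h D)" "ord_le k D" "D 0 = 1"
    and "Wr h (map v [1..<k+1]) \<noteq> 0"
  shows "D = annihilator h (map v [1..<k+1])"
  using assms basis_in_kernel[OF assms(1)] by (intro annihilator_unique) (simp_all del: upt_Suc)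

lemma Wr_vu_nonzero:
  assumes h: "h \<noteq> 0"
    and V: "is_basis_of v m (op_kernel h D0)" and U: "is_basis_of u n (op_kernel h D1)"
    and disjoint: "\<And>w. op_apply h D0 w = 0 \<Longrightarrow> op_apply h D1 w = 0 \<Longrightarrow> w = 0"
    and ab: "a \<le> m" "b \<le> n"
  shows "Wr_vu h v a u b \<noteq> 0"
proof -
  have "const_indep (vu_list v m u n)" unfolding vu_list_def
    by (rule const_indep_append[OF basis_const_indep[OF V] basis_in_kernel[OF V]
          basis_const_indep[OF U] basis_in_kernel[OF U] disjoint])
  hence "const_indep (take a (map v [1..<m+1]) @ take b (map u [1..<n+1]))"
    unfolding vu_list_def by (rule const_indep_take_append)
  hence "const_indep (vu_list v a u b)" using ab by (simp add: vu_list_def take_map take_upt del: upt_Suc)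
  thus ?thesis unfolding Wr_vu_eq by (rule Wr_nonzero_if_const_indep[OF h])
qed

section \<open>Parity sequences as lattice paths\<close>

lemma parity_seqs_values:
  "s \<in> parity_seqs m n \<Longrightarrow> i \<in> {1..m+n} \<Longrightarrow> s i = 1 \<or> s i = -1"
  by (simp add: parity_seqs_def)

lemma card_parity_seqs_plus: "s \<in> parity_seqs m n \<Longrightarrow> card {j\<in>{1..m+n}. s j = 1} = m"
  by (simp add: parity_seqs_def)

lemma card_parity_seqs_minus:
  assumes s: "s \<in> parity_seqs m n" shows "card {j\<in>{1..m+n}. s j = -1} = n"
proof -
  have "card {j\<in>{1..m+n}. s j = 1} + card {j\<in>{1..m+n}. s j = -1}
      = card ({j\<in>{1..m+n}. s j = 1} \<union> {j\<in>{1..m+n}. s j = -1})"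
    by (rule card_Un_disjoint[symmetric]) auto
  also have "{j\<in>{1..m+n}. s j = 1} \<union> {j\<in>{1..m+n}. s j = -1} = {1..m+n}"
    using parity_seqs_values[OF s] by blast
  finally show ?thesis using card_parity_seqs_plus[OF s] by simp
qed

lemma s_plus_le: "s_plus N s i \<le> card {j\<in>{1..N}. s j = 1}"
  unfolding s_plus_def by (rule card_mono) auto

lemma s_minus_le: "s_minus N s i \<le> card {j\<in>{1..N}. s j = -1}"
  unfolding s_minus_def by (rule card_mono) auto

lemma s_plus_0: "s_plus N s 0 = card {j\<in>{1..N}. s j = 1}"
  unfolding s_plus_def by (rule arg_cong[where f=card]) auto

lemma s_plus_self: "s_plus N s N = 0"
  by (simp add: s_plus_def)

lemma s_minus_1: "s_minus N s 1 = 0"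
  by (simp add: s_minus_def)

lemma s_minus_Suc_self: "s_minus N s (Suc N) = card {j\<in>{1..N}. s j = -1}"
  unfolding s_minus_def by (rule arg_cong[where f=card]) auto

lemma s_plus_pred:
  assumes "i \<in> {1..N}"
  shows "s_plus N s (i - 1) = s_plus N s i + (if s i = 1 then 1 else 0)"
proof -
  let ?S = "{j\<in>{1..N}. i < j \<and> s j = 1}"
  have "\<And>x. (i - 1 < x) = (x = i \<or> i < x)" using assms by auto
  hence "{j\<in>{1..N}. i - 1 < j \<and> s j = 1} = (if s i = 1 then insert i ?S else ?S)"
    using assms by auto
  thus ?thesis unfolding s_plus_def by simp
qed

lemma s_minus_Suc:
  assumes "i \<in> {1..N}"
  shows "s_minus N s (Suc i) = s_minus N s i + (if s i = -1 then 1 else 0)"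
proof -
  let ?S = "{j\<in>{1..N}. j < i \<and> s j = -1}"
  have "\<And>x. (x < Suc i) = (x = i \<or> x < i)" by auto
  hence "{j\<in>{1..N}. j < Suc i \<and> s j = -1} = (if s i = -1 then insert i ?S else ?S)"
    using assms by auto
  thus ?thesis unfolding s_minus_def by simp
qed

text \<open>
  The entries \<open>s\<^sub>N, \<dots>, s\<^sub>1\<close> describe a lattice path from
  \<open>(0, n)\<close> to \<open>(m, 0)\<close> through the points \<open>(s\<^sup>+\<^sub>i, s\<^sup>-\<^sub>i\<^sub>+\<^sub>1)\<close>, along which the products telescope.
\<close>

lemma sp_prod_parity_path:
  fixes L A B :: "nat \<Rightarrow> nat \<Rightarrow> nat \<Rightarrow> K"
  assumes s: "s \<in> parity_seqs m n"
    and step_A: "\<And>a b. a < m \<Longrightarrow> b \<le> n \<Longrightarrow> L (Suc a) b = sp_mult h (A a b) (L a b)"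
    and step_B: "\<And>a b. a \<le> m \<Longrightarrow> b < n \<Longrightarrow> L a (Suc b) = sp_mult h (B a b) (L a b)"
    and B_0: "\<And>a b. B a b 0 \<noteq> 0" and L_0: "L 0 n 0 \<noteq> 0"
  shows "sp_prod h (map (\<lambda>i. if s i = 1 then A (s_plus (m+n) s i) (s_minus (m+n) s i)
                           else sp_inv h (B (s_plus (m+n) s i) (s_minus (m+n) s i))) [1..<m+n+1])
         = sp_mult h (L m 0) (sp_inv h (L 0 n))"
proof -
  define N where "N = m + n"
  define sp where "sp = s_plus N s"
  define sm where "sm = s_minus N s"
  define F where "F = (\<lambda>i. if s i = 1 then A (sp i) (sm i) else sp_inv h (B (sp i) (sm i)))"
  have sp_le: "sp i \<le> m" and sm_le: "sm i \<le> n" for i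
    using s_plus_le[of N s i] s_minus_le[of N s i] card_parity_seqs_plus[OF s]
      card_parity_seqs_minus[OF s] by (simp_all add: sp_def sm_def N_def)
  have F_step: "sp_mult h (F i) (L (sp i) (sm (Suc i))) = L (sp (i - 1)) (sm i)"
    if i: "i \<in> {1..N}" for i
  proof (cases "s i = 1")
    case True
    hence "sp (i - 1) = Suc (sp i)" "sm (Suc i) = sm i"
      using s_plus_pred[OF i] s_minus_Suc[OF i] by (simp_all add: sp_def sm_def)
    thus ?thesis using True step_A[of "sp i" "sm i"] sp_le[of "i - 1"] sm_le[of i] by (simp add: F_def)
  next
    case False
    hence "s i = -1" using parity_seqs_values[OF s] i by (auto simp: N_def)
    hence "sp (i - 1) = sp i" "sm (Suc i) = Suc (sm i)"
      using s_plus_pred[OF i] s_minus_Suc[OF i] by (simp_all add: sp_def sm_def)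
    thus ?thesis using False step_B[of "sp i" "sm i"] sp_le[of i] sm_le[of "Suc i"] B_0
      by (simp add: F_def sp_mult_sp_inv_cancel_left)
  qed
  have "sp_prod h (map F [i..<N+1]) = sp_mult h (L (sp (i - 1)) (sm i)) (sp_inv h (L 0 n))"
    if "1 \<le> i" "i \<le> N + 1" for i
    using that(2)
  proof (induction rule: inc_induct)
    case base
    have "sp N = 0" "sm (N + 1) = n"
      using s_plus_self s_minus_Suc_self card_parity_seqs_minus[OF s] by (simp_all add: sp_def sm_def N_def)
    thus ?case using L_0 by (simp add: sp_mult_sp_inv_right)
  next
    case (step k)
    hence "[k..<N+1] = k # [Suc k..<N+1]" "k \<in> {1..N}" using that(1) by (auto simp: upt_conv_Cons)
    thus ?case using step.IH F_step by (simp add: sp_mult_assoc[symmetric] del: upt_Suc)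
  qed
  moreover have "sp 0 = m" "sm 1 = 0"
    using s_plus_0 s_minus_1 card_parity_seqs_plus[OF s] by (simp_all add: sp_def sm_def N_def)
  ultimately have "sp_prod h (map F [1..<N+1]) = sp_mult h (L m 0) (sp_inv h (L 0 n))" by simp
  thus ?thesis unfolding F_def sp_def sm_def N_def .
qed

theorem proposition2p3:
  fixes h :: complex and m n :: nat
    and D0 D1 :: "nat \<Rightarrow> K"
    and v u :: "nat \<Rightarrow> K"
    and s :: "nat \<Rightarrow> int"
    and f :: "nat \<Rightarrow> K"
  assumes h: "h \<noteq> 0"
    and ops: "is_diff_op D0" "is_diff_op D1"
    and const: "D1 0 = 1" "D0 0 = D1 0"
    and ords: "op_ord D0 = m" "op_ord D1 = n"
    and cf: "completely_factorable h D0" "completely_factorable h D1"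
    and minimal: "\<And>E0 E1. is_diff_op E0 \<Longrightarrow> is_diff_op E1 \<Longrightarrow> E1 \<noteq> (\<lambda>_. 0) \<Longrightarrow>
                     sp_mult h (sp_mult h D0 (sp_inv h D1)) E1 = E0 \<Longrightarrow> n \<le> op_ord E1"
    and V: "is_basis_of v m (op_kernel h D0)"
    and U: "is_basis_of u n (op_kernel h D1)"
    and s: "s \<in> parity_seqs m n"
    and f_def: "\<And>i. i \<in> {1..m+n} \<Longrightarrow> f i =
        (if s i = 1
         then lnd h (Wr_vu h v (s_plus (m+n) s i + 1) u (s_minus (m+n) s i) /
                     shift h 1 (Wr_vu h v (s_plus (m+n) s i) u (s_minus (m+n) s i)))
         else lnd h (Wr_vu h v (s_plus (m+n) s i) u (s_minus (m+n) s i + 1) /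
                     shift h 1 (Wr_vu h v (s_plus (m+n) s i) u (s_minus (m+n) s i))))"
  shows "sp_mult h D0 (sp_inv h D1) =
         sp_prod h (map (\<lambda>i. if s i = 1 then one_minus_tau (f i)
                            else sp_inv h (one_minus_tau (f i))) [1..<m+n+1])"
proof -
  define L where "L a b = annihilator h (vu_list v a u b)" for a b
  define A where "A a b = one_minus_tau (lnd h (Wr_vu h v (a + 1) u b / shift h 1 (Wr_vu h v a u b)))"
    for a b
  define B where "B a b = one_minus_tau (lnd h (Wr_vu h v a u (b + 1) / shift h 1 (Wr_vu h v a u b)))"
    for a b
  have D0: "ord_le m D0" "D0 0 = 1" and D1: "ord_le n D1" "D1 0 = 1"
    using ord_le_op_ord[OF ops(1)] ord_le_op_ord[OF ops(2)] ords const by simp_all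
  have W: "Wr_vu h v a u b \<noteq> 0" if "a \<le> m" "b \<le> n" for a b
    using Wr_vu_nonzero[OF h V U minimal_fraction_kernels_disjoint[OF D0 D1 minimal] that] .
  have L_ends: "D0 = L m 0" "D1 = L 0 n"
    using basis_annihilator[OF V D0] basis_annihilator[OF U D1] W[of m 0] W[of 0 n]
    by (simp_all add: L_def Wr_vu_eq vu_list_def del: upt_Suc)
  have "L (Suc a) b = sp_mult h (A a b) (L a b)" if "a < m" "b \<le> n" for a b
    using that by (simp add: L_def A_def W annihilator_vu_list_Suc_left)
  moreover have "L a (Suc b) = sp_mult h (B a b) (L a b)" if "a \<le> m" "b < n" for a b
    using that by (simp add: L_def B_def W annihilator_vu_list_Suc_right)
  ultimately have "sp_mult h (L m 0) (sp_inv h (L 0 n)) =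
      sp_prod h (map (\<lambda>i. if s i = 1 then A (s_plus (m+n) s i) (s_minus (m+n) s i)
                         else sp_inv h (B (s_plus (m+n) s i) (s_minus (m+n) s i))) [1..<m+n+1])"
    using L_ends D1 by (intro sp_prod_parity_path[OF s, symmetric]) (simp_all add: B_def)
  also have "\<dots> = sp_prod h (map (\<lambda>i. if s i = 1 then one_minus_tau (f i)
                            else sp_inv h (one_minus_tau (f i))) [1..<m+n+1])"
    by (intro arg_cong[where f="sp_prod h"] map_cong refl) (simp add: f_def A_def B_def del: upt_Suc)
  finally show ?thesis using L_ends by simp
qed

end
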